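(* Let $\mathcal A$ be an infinite simple group, $X$ a finite generating system, $\mathcal K$ a proper non-trivial subgroup and $\Gamma=\mathrm{Sch}(\mathcal A,\mathcal K,X)$. Then the group $\mathrm{Aut}_X(\Gamma)$ of label-preserving automorphisms has infinitely many orbits on vertices. Moreover, if $\mathcal K$ is cyclic of prime order, then $\mathrm{Aut}(\Gamma)$ has infinitely many orbits on vertices, and therefore $\Gamma$ is not almost transitive.
   Context: The Schreier graph $\mathrm{Sch}(\mathcal A,\mathcal K,X)$ has vertices the right cosets $\mathcal Kg$ and, for each coset and each $x$ with $x\in X$ or $x^{-1}\in X$, an edge labeled $x$ from $\mathcal Kg$ to $\mathcal Kgx$ whose inverse is the edge labeled $x^{-1}$ from $\mathcal Kgx$. $\mathrm{Aut}(\Gamma)$ is the group of all graph automorphisms (ignoring labels). A graph is almost transitive if there is a finite set $V_0$ of vertices such that every vertex can be mapped into $V_0$ by an automorphism. *)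

theory Defs
  imports "HOL-Algebra.Algebra"
begin

text \<open>The library locale simple_group
  requires order G > 1, where order is the cardinality, which is 0 for infinite
  groups; hence we use the plain definition: nontrivial group whose only normal
  subgroups are the trivial one and the whole group.\<close>
definition simple_grp :: "('a, 'b) monoid_scheme \<Rightarrow> bool" where
  "simple_grp A \<longleftrightarrow> group A \<and> carrier A \<noteq> {\<one>\<^bsub>A\<^esub>} \<and>
     (\<forall>H. H \<lhd> A \<longrightarrow> H = {\<one>\<^bsub>A\<^esub>} \<or> H = carrier A)"

definition sch_vertices :: "('a, 'b) monoid_scheme \<Rightarrow> 'a set \<Rightarrow> 'a set set" where
  "sch_vertices A K = RCOSETS A K"

definition sch_labels :: "('a, 'b) monoid_scheme \<Rightarrow> 'a set \<Rightarrow> 'a set" where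
  "sch_labels A S = {x \<in> carrier A. x \<in> S \<or> m_inv A x \<in> S}"

definition sch_edges :: "('a, 'b) monoid_scheme \<Rightarrow> 'a set \<Rightarrow> 'a set \<Rightarrow> ('a set \<times> 'a) set" where
  "sch_edges A K S = sch_vertices A K \<times> sch_labels A S"

definition sch_origin :: "'a set \<times> 'a \<Rightarrow> 'a set" where
  "sch_origin e = fst e"

definition sch_terminus :: "('a, 'b) monoid_scheme \<Rightarrow> 'a set \<times> 'a \<Rightarrow> 'a set" where
  "sch_terminus A e = r_coset A (fst e) (snd e)"

definition sch_label :: "'a set \<times> 'a \<Rightarrow> 'a" where
  "sch_label e = snd e"

definition sch_inverse :: "('a, 'b) monoid_scheme \<Rightarrow> 'a set \<times> 'a \<Rightarrow> 'a set \<times> 'a" where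
  "sch_inverse A e = (r_coset A (fst e) (snd e), m_inv A (snd e))"

definition sch_aut :: "('a, 'b) monoid_scheme \<Rightarrow> 'a set \<Rightarrow> 'a set \<Rightarrow>
    ('a set \<Rightarrow> 'a set) \<Rightarrow> ('a set \<times> 'a \<Rightarrow> 'a set \<times> 'a) \<Rightarrow> bool" where
  "sch_aut A K S f g \<longleftrightarrow>
     bij_betw f (sch_vertices A K) (sch_vertices A K) \<and>
     bij_betw g (sch_edges A K S) (sch_edges A K S) \<and>
     (\<forall>e \<in> sch_edges A K S.
        f (sch_origin e) = sch_origin (g e) \<and>
        f (sch_terminus A e) = sch_terminus A (g e) \<and>
        g (sch_inverse A e) = sch_inverse A (g e))"

definition sch_aut_X :: "('a, 'b) monoid_scheme \<Rightarrow> 'a set \<Rightarrow> 'a set \<Rightarrow>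
    ('a set \<Rightarrow> 'a set) \<Rightarrow> ('a set \<times> 'a \<Rightarrow> 'a set \<times> 'a) \<Rightarrow> bool" where
  "sch_aut_X A K S f g \<longleftrightarrow> sch_aut A K S f g \<and>
     (\<forall>e \<in> sch_edges A K S. sch_label (g e) = sch_label e)"

definition vertex_orbits :: "('a, 'b) monoid_scheme \<Rightarrow> 'a set \<Rightarrow>
    (('a set \<Rightarrow> 'a set) \<Rightarrow> ('a set \<times> 'a \<Rightarrow> 'a set \<times> 'a) \<Rightarrow> bool) \<Rightarrow> 'a set set set" where
  "vertex_orbits A K P =
     (\<lambda>v. {w \<in> sch_vertices A K. \<exists>f g. P f g \<and> f v = w}) ` sch_vertices A K"

definition sch_almost_transitive :: "('a, 'b) monoid_scheme \<Rightarrow> 'a set \<Rightarrow> 'a set \<Rightarrow> bool" where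
  "sch_almost_transitive A K S \<longleftrightarrow>
     (\<exists>V0. finite V0 \<and> V0 \<subseteq> sch_vertices A K \<and>
        (\<forall>v \<in> sch_vertices A K. \<exists>f g. sch_aut A K S f g \<and> f v \<in> V0))"

end

theory Submission
  imports Defs
begin

text \<open>
  A label-preserving automorphism commutes with the right translations C \<mapsto> C a, so it has the
  form K a \<mapsto> K n a with n in the normaliser N of K; finitely many Aut_X-orbits would therefore
  make N a subgroup of finite index. In an infinite simple group such a subgroup has nontrivial,
  hence full, normal core (otherwise the group would embed into the self-maps of finitely many
  cosets), so N would be the whole group and K a proper nontrivial normal subgroup.

  For arbitrary automorphisms we compare ball sizes. The r-ball around K a is the image of the
  words of length at most r under w \<mapsto> K a w, and it is smaller than the word ball exactly when
  a d a\<inverse> \<in> K for a nontrivial quotient d of two such words. As K is nontrivial every ball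
  eventually shrinks in this sense, and automorphisms preserve ball sizes, so finitely many orbits
  would give a single radius R at which every vertex K g conjugates some nontrivial element of the
  finite set of quotients of words of length at most R into K. When K has prime order, two
  elements conjugating the same d into K differ by an element of N, since both conjugates
  generate K; so again N would have finite index.
\<close>

section \<open>Subgroups of finite index in infinite simple groups\<close>

definition normal_core :: "('a, 'b) monoid_scheme \<Rightarrow> 'a set \<Rightarrow> 'a set" where
  "normal_core G H = {c \<in> carrier G. \<forall>g \<in> carrier G. g \<otimes>\<^bsub>G\<^esub> c \<otimes>\<^bsub>G\<^esub> inv\<^bsub>G\<^esub> g \<in> H}"

context group
begin

lemma inv_mult_cancel_left [simp]: "a \<in> carrier G \<Longrightarrow> b \<in> carrier G \<Longrightarrow> inv a \<otimes> (a \<otimes> b) = b"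
  by (simp add: m_assoc [symmetric])

lemma mult_inv_cancel_left [simp]: "a \<in> carrier G \<Longrightarrow> b \<in> carrier G \<Longrightarrow> a \<otimes> (inv a \<otimes> b) = b"
  by (simp add: m_assoc [symmetric])

lemma normal_core_subset: "subgroup H G \<Longrightarrow> normal_core G H \<subseteq> H"
  by (force simp: normal_core_def dest: bspec[of _ _ \<one>])

lemma normal_core_normal:
  assumes H: "subgroup H G"
  shows "normal_core G H \<lhd> G"
proof (rule normal_invI)
  show "subgroup (normal_core G H) G"
  proof (rule subgroupI)
    show "normal_core G H \<subseteq> carrier G" by (auto simp: normal_core_def)
    show "normal_core G H \<noteq> {}"
      using subgroup.one_closed[OF H] by (auto simp: normal_core_def)
  next
    fix a assume "a \<in> normal_core G H"
    then show "inv a \<in> normal_core G H"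
      using subgroup.m_inv_closed[OF H]
      by (fastforce simp: normal_core_def inv_mult_group m_assoc)
  next
    fix a b assume "a \<in> normal_core G H" "b \<in> normal_core G H"
    moreover have "g \<otimes> (a \<otimes> b) \<otimes> inv g = (g \<otimes> a \<otimes> inv g) \<otimes> (g \<otimes> b \<otimes> inv g)"
      if "g \<in> carrier G" "a \<in> carrier G" "b \<in> carrier G" for g
      using that by (simp add: m_assoc)
    ultimately show "a \<otimes> b \<in> normal_core G H"
      using subgroup.m_closed[OF H] by (auto simp: normal_core_def)
  qed
next
  fix x h assume "x \<in> carrier G" "h \<in> normal_core G H"
  moreover have "g \<otimes> (x \<otimes> h \<otimes> inv x) \<otimes> inv g = (g \<otimes> x) \<otimes> h \<otimes> inv (g \<otimes> x)"
    if "g \<in> carrier G" "x \<in> carrier G" "h \<in> carrier G" for g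
    using that by (simp add: m_assoc inv_mult_group)
  ultimately show "x \<otimes> h \<otimes> inv x \<in> normal_core G H"
    by (auto simp: normal_core_def)
qed

lemma mult_inv_mem_normal_core:
  assumes H: "subgroup H G" and "G0 \<subseteq> carrier G" and cover: "carrier G \<subseteq> (\<Union>c\<in>G0. H #> c)"
    and x: "x \<in> carrier G" and y: "y \<in> carrier G"
    and eq: "\<And>c. c \<in> G0 \<Longrightarrow> H #> (c \<otimes> x) = H #> (c \<otimes> y)"
  shows "x \<otimes> inv y \<in> normal_core G H"
  unfolding normal_core_def
proof (intro CollectI conjI ballI)
  fix g assume g: "g \<in> carrier G"
  then obtain c where c: "c \<in> G0" "g \<in> H #> c" using cover by blast
  have cG: "c \<in> carrier G" using c \<open>G0 \<subseteq> carrier G\<close> by blast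
  have "g \<otimes> inv c \<in> H" using subgroup.rcos_module_imp[OF H is_group cG c(2)] .
  moreover have "(c \<otimes> x) \<otimes> inv (c \<otimes> y) \<in> H"
    using subgroup.rcos_module_imp[OF H is_group _ repr_independenceD[OF H _ eq[OF c(1), symmetric]]]
      x y cG
    by simp
  ultimately have "(g \<otimes> inv c) \<otimes> ((c \<otimes> x) \<otimes> inv (c \<otimes> y)) \<otimes> inv (g \<otimes> inv c) \<in> H"
    using subgroup.m_closed[OF H] subgroup.m_inv_closed[OF H] by blast
  then show "g \<otimes> (x \<otimes> inv y) \<otimes> inv g \<in> H"
    using g cG x y by (simp add: m_assoc inv_mult_group)
qed (use x y in simp)

text \<open>With trivial core, x is determined by its action on the finitely many cosets H c.\<close>
lemma finite_carrier_if_normal_core_trivial: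
  assumes H: "subgroup H G" and "finite G0" "G0 \<subseteq> carrier G"
    and cover: "carrier G \<subseteq> (\<Union>c\<in>G0. H #> c)"
    and core: "normal_core G H = {\<one>}"
  shows "finite (carrier G)"
proof -
  define act where "act x = (\<lambda>c\<in>G0. H #> (c \<otimes> x))" for x
  have "inj_on act (carrier G)"
  proof (rule inj_onI)
    fix x y assume x: "x \<in> carrier G" and y: "y \<in> carrier G" and "act x = act y"
    have "H #> (c \<otimes> x) = H #> (c \<otimes> y)" if "c \<in> G0" for c
      using fun_cong[OF \<open>act x = act y\<close>, of c] that by (simp add: act_def)
    then have "x \<otimes> inv y \<in> normal_core G H"
      using mult_inv_mem_normal_core[OF H \<open>G0 \<subseteq> carrier G\<close> cover x y] by blast
    then have "x \<otimes> inv y = \<one>" using core by blast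
    then show "x = y" using inv_solve_right'[of \<one> x y] x y by simp
  qed
  moreover have "act ` carrier G \<subseteq> G0 \<rightarrow>\<^sub>E (\<lambda>c. H #> c) ` G0"
  proof -
    have "H #> (c \<otimes> x) \<in> (\<lambda>c. H #> c) ` G0" if "c \<in> G0" "x \<in> carrier G" for c x
    proof -
      have "c \<otimes> x \<in> carrier G" using that \<open>G0 \<subseteq> carrier G\<close> by blast
      then obtain c' where "c' \<in> G0" "c \<otimes> x \<in> H #> c'"
        using cover by blast
      then show ?thesis using repr_independence[OF _ _ H] \<open>G0 \<subseteq> carrier G\<close> by blast
    qed
    then show ?thesis by (auto simp: act_def)
  qed
  moreover have "finite (G0 \<rightarrow>\<^sub>E (\<lambda>c. H #> c) ` G0)"
    using \<open>finite G0\<close> by (simp add: finite_PiE)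
  ultimately show ?thesis using inj_on_finite by blast
qed

lemma finite_index_subgroup_of_simple:
  assumes "simple_grp G" "infinite (carrier G)" "subgroup H G" "finite G0" "G0 \<subseteq> carrier G"
    and "carrier G \<subseteq> (\<Union>c\<in>G0. H #> c)"
  shows "H = carrier G"
proof -
  have "normal_core G H \<noteq> {\<one>}"
    using finite_carrier_if_normal_core_trivial assms(2-) by blast
  then have "normal_core G H = carrier G"
    using assms(1) normal_core_normal[OF assms(3)] by (auto simp: simple_grp_def)
  then show ?thesis
    using normal_core_subset[OF assms(3)] subgroup.subset[OF assms(3)] by blast
qed

section \<open>Normalisers\<close>

lemma mem_normalizer_iff:
  assumes K: "subgroup K G"
  shows "n \<in> normalizer G K \<longleftrightarrow> n \<in> carrier G \<and> (\<forall>k\<in>K. n \<otimes> k \<otimes> inv n \<in> K \<and> inv n \<otimes> k \<otimes> n \<in> K)"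
proof -
  have KG: "K \<subseteq> carrier G" using subgroup.subset[OF K] .
  have conj: "l_coset G n K #> inv n = (\<lambda>k. n \<otimes> k \<otimes> inv n) ` K" if "n \<in> carrier G"
    using that by (auto simp: l_coset_def r_coset_def)
  have "l_coset G n K #> inv n = K \<longleftrightarrow> (\<forall>k\<in>K. n \<otimes> k \<otimes> inv n \<in> K \<and> inv n \<otimes> k \<otimes> n \<in> K)"
    if n: "n \<in> carrier G"
  proof
    assume eq: "l_coset G n K #> inv n = K"
    show "\<forall>k\<in>K. n \<otimes> k \<otimes> inv n \<in> K \<and> inv n \<otimes> k \<otimes> n \<in> K"
    proof
      fix k assume k: "k \<in> K"
      then obtain k' where "k' \<in> K" "k = n \<otimes> k' \<otimes> inv n"
        using eq conj[OF n] by blast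
      moreover have "k' \<in> carrier G" using \<open>k' \<in> K\<close> KG by blast
      ultimately have "inv n \<otimes> k \<otimes> n \<in> K"
        using n by (simp add: m_assoc)
      moreover have "n \<otimes> k \<otimes> inv n \<in> (\<lambda>k. n \<otimes> k \<otimes> inv n) ` K"
        using k by blast
      ultimately show "n \<otimes> k \<otimes> inv n \<in> K \<and> inv n \<otimes> k \<otimes> n \<in> K"
        using eq conj[OF n] by simp
    qed
  next
    assume closed: "\<forall>k\<in>K. n \<otimes> k \<otimes> inv n \<in> K \<and> inv n \<otimes> k \<otimes> n \<in> K"
    have "k \<in> (\<lambda>k. n \<otimes> k \<otimes> inv n) ` K" if k: "k \<in> K" for k
    proof (rule image_eqI)
      show "k = n \<otimes> (inv n \<otimes> k \<otimes> n) \<otimes> inv n"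
        using k n KG by (auto simp: m_assoc)
    qed (use k closed in blast)
    with closed show "l_coset G n K #> inv n = K"
      unfolding conj[OF n] by blast
  qed
  then show ?thesis
    using KG by (auto simp: normalizer_def stabilizer_def)
qed

lemma subgroup_subset_normalizer: "subgroup K G \<Longrightarrow> K \<subseteq> normalizer G K"
  by (auto simp: mem_normalizer_iff subgroup.m_closed subgroup.m_inv_closed subgroup.mem_carrier)

lemma normalizer_infinite_index:
  assumes "simple_grp G" "infinite (carrier G)"
    and K: "subgroup K G" "K \<noteq> {\<one>}" "K \<noteq> carrier G"
    and "finite G0" "G0 \<subseteq> carrier G"
  shows "\<not> carrier G \<subseteq> (\<Union>c\<in>G0. normalizer G K #> c)"
proof
  assume "carrier G \<subseteq> (\<Union>c\<in>G0. normalizer G K #> c)"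
  then have "normalizer G K = carrier G"
    using finite_index_subgroup_of_simple normalizer_imp_subgroup subgroup.subset[OF K(1)] assms
    by blast
  then have "x \<otimes> k \<otimes> inv x \<in> K" if "x \<in> carrier G" "k \<in> K" for x k
    using that mem_normalizer_iff[OF K(1), of x] by blast
  then have "K \<lhd> G"
    using K(1) by (intro normal_invI)
  then show False
    using assms(1) K by (auto simp: simple_grp_def)
qed

lemma conj_mem_if_conj_generators_mem:
  assumes H: "subgroup H G" and "T \<subseteq> carrier G" "y \<in> carrier G"
    and gens: "\<And>t. t \<in> T \<Longrightarrow> y \<otimes> t \<otimes> inv y \<in> H"
    and "x \<in> generate G T"
  shows "y \<otimes> x \<otimes> inv y \<in> H"
  using \<open>x \<in> generate G T\<close>
proof (induction rule: generate.induct)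
  case one
  then show ?case using \<open>y \<in> carrier G\<close> subgroup.one_closed[OF H] by simp
next
  case (incl t)
  then show ?case by (rule gens)
next
  case (inv t)
  then have "inv (y \<otimes> t \<otimes> inv y) \<in> H"
    using gens subgroup.m_inv_closed[OF H] by blast
  then show ?case
    using inv \<open>T \<subseteq> carrier G\<close> \<open>y \<in> carrier G\<close> by (auto simp: inv_mult_group m_assoc)
next
  case (eng a b)
  have "a \<in> carrier G" "b \<in> carrier G"
    using eng.hyps generate_incl[OF \<open>T \<subseteq> carrier G\<close>] by auto
  moreover have "(y \<otimes> a \<otimes> inv y) \<otimes> (y \<otimes> b \<otimes> inv y) \<in> H"
    using subgroup.m_closed[OF H eng.IH] .
  ultimately show ?case
    using \<open>y \<in> carrier G\<close> by (simp add: m_assoc)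
qed

lemma prime_card_subgroup_eq_generate:
  assumes K: "subgroup K G" and p: "Factorial_Ring.prime (card K)" and c: "c \<in> K" "c \<noteq> \<one>"
  shows "K = generate G {c}"
proof -
  have "finite K" using p card_ge_0_finite prime_gt_0_nat by blast
  have cG: "c \<in> carrier G" using subgroup.mem_carrier[OF K c(1)] .
  have sub: "generate G {c} \<subseteq> K"
    using c(1) by (intro generate_subgroup_incl[OF _ K]) simp
  have "subgroup (generate G {c}) (G\<lparr>carrier := K\<rparr>)"
    using subgroup_incl[OF generate_is_subgroup K sub] cG by simp
  then have "card K = card (rcosets\<^bsub>G\<lparr>carrier := K\<rparr>\<^esub> (generate G {c})) * card (generate G {c})"
    using group.lagrange[OF subgroup_imp_group[OF K]] by (simp add: order_def)
  then have "card (generate G {c}) dvd card K"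
    by simp
  moreover have "card (generate G {c}) \<noteq> 1"
  proof
    assume "card (generate G {c}) = 1"
    moreover have "{\<one>, c} \<subseteq> generate G {c}"
      using generate.one generate.incl[of c "{c}" G] by blast
    ultimately show False
      using c(2) card_1_singletonE by (metis insert_subset singletonD)
  qed
  ultimately have "card (generate G {c}) = card K"
    using p unfolding prime_nat_iff by blast
  then show ?thesis
    using card_subset_eq[OF \<open>finite K\<close> sub] by simp
qed

text \<open>For K of prime order, any nontrivial element conjugated into K conjugates onto a generator.\<close>
lemma mult_inv_mem_normalizer_of_prime_card:
  assumes K: "subgroup K G" and p: "Factorial_Ring.prime (card K)"
    and d: "d \<in> carrier G" "d \<noteq> \<one>" and g: "g \<in> carrier G" and h: "h \<in> carrier G"
    and gd: "g \<otimes> d \<otimes> inv g \<in> K" and hd: "h \<otimes> d \<otimes> inv h \<in> K"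
  shows "g \<otimes> inv h \<in> normalizer G K"
proof -
  have gen: "K = generate G {x \<otimes> d \<otimes> inv x}" if x: "x \<in> carrier G" "x \<otimes> d \<otimes> inv x \<in> K" for x
  proof (rule prime_card_subgroup_eq_generate[OF K p x(2)])
    show "x \<otimes> d \<otimes> inv x \<noteq> \<one>"
    proof
      assume "x \<otimes> d \<otimes> inv x = \<one>"
      then have "inv x \<otimes> (x \<otimes> d \<otimes> inv x) \<otimes> x = \<one>" using x(1) by simp
      then show False using x(1) d by (simp add: m_assoc)
    qed
  qed
  let ?y = "g \<otimes> inv h"
  have y: "?y \<in> carrier G" "inv ?y \<in> carrier G" using g h by simp_all
  have "?y \<otimes> (h \<otimes> d \<otimes> inv h) \<otimes> inv ?y = g \<otimes> d \<otimes> inv g"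
    and "inv ?y \<otimes> (g \<otimes> d \<otimes> inv g) \<otimes> inv (inv ?y) = h \<otimes> d \<otimes> inv h"
    using g h d by (simp_all add: inv_mult_group m_assoc)
  then have "?y \<otimes> k \<otimes> inv ?y \<in> K" and "inv ?y \<otimes> k \<otimes> inv (inv ?y) \<in> K" if "k \<in> K" for k
    using conj_mem_if_conj_generators_mem[OF K _ y(1), of "{h \<otimes> d \<otimes> inv h}" k]
      conj_mem_if_conj_generators_mem[OF K _ y(2), of "{g \<otimes> d \<otimes> inv g}" k]
      gen[OF g gd] gen[OF h hd] that g h d gd hd by simp_all
  then show ?thesis
    using y mem_normalizer_iff[OF K] by simp
qed

lemma finite_index_normalizer_of_prime_card:
  assumes K: "subgroup K G" and p: "Factorial_Ring.prime (card K)" and "finite D" "D \<subseteq> carrier G"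
    and conj: "\<And>g. g \<in> carrier G \<Longrightarrow> \<exists>d\<in>D. d \<noteq> \<one> \<and> g \<otimes> d \<otimes> inv g \<in> K"
  obtains G0 where "finite G0" "G0 \<subseteq> carrier G" "carrier G \<subseteq> (\<Union>c\<in>G0. normalizer G K #> c)"
proof -
  define conjugator where "conjugator d = (SOME c. c \<in> carrier G \<and> c \<otimes> d \<otimes> inv c \<in> K)" for d
  define D' where "D' = {d \<in> D. d \<noteq> \<one> \<and> (\<exists>c\<in>carrier G. c \<otimes> d \<otimes> inv c \<in> K)}"
  have conjugator: "conjugator d \<in> carrier G \<and> conjugator d \<otimes> d \<otimes> inv (conjugator d) \<in> K"
    if "d \<in> D'" for d
    using that unfolding D'_def conjugator_def by (metis (mono_tags, lifting) mem_Collect_eq)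
  have "carrier G \<subseteq> (\<Union>c\<in>conjugator ` D'. normalizer G K #> c)"
  proof
    fix g assume g: "g \<in> carrier G"
    then obtain d where d: "d \<in> D" "d \<noteq> \<one>" "g \<otimes> d \<otimes> inv g \<in> K" using conj by blast
    then have "d \<in> D'" using g by (auto simp: D'_def)
    then have "g \<otimes> inv (conjugator d) \<in> normalizer G K"
      using mult_inv_mem_normalizer_of_prime_card[OF K p _ d(2) g _ d(3)] conjugator d(1) \<open>D \<subseteq> carrier G\<close>
      by blast
    then have "g \<in> normalizer G K #> conjugator d"
      using subgroup.rcos_module_rev[OF normalizer_imp_subgroup is_group] subgroup.subset[OF K]
        conjugator[OF \<open>d \<in> D'\<close>] g by blast
    then show "g \<in> (\<Union>c\<in>conjugator ` D'. normalizer G K #> c)"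
      using \<open>d \<in> D'\<close> by blast
  qed
  moreover have "finite (conjugator ` D')" using \<open>finite D\<close> by (simp add: D'_def)
  moreover have "conjugator ` D' \<subseteq> carrier G" using conjugator by blast
  ultimately show ?thesis using that by blast
qed

end

section \<open>Label-preserving automorphisms\<close>

context group
begin

lemma sch_vertices_iff: "v \<in> sch_vertices G K \<longleftrightarrow> (\<exists>a\<in>carrier G. v = K #> a)"
  by (auto simp: sch_vertices_def RCOSETS_def)

lemma r_coset_in_sch_vertices: "a \<in> carrier G \<Longrightarrow> K #> a \<in> sch_vertices G K"
  by (auto simp: sch_vertices_iff)

lemma r_coset_eq_iff:
  assumes K: "subgroup K G" and "a \<in> carrier G" "b \<in> carrier G"
  shows "K #> a = K #> b \<longleftrightarrow> a \<otimes> inv b \<in> K"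
proof
  assume "K #> a = K #> b"
  then show "a \<otimes> inv b \<in> K"
    using subgroup.rcos_module_imp[OF K is_group] repr_independenceD[OF K] assms by metis
next
  assume "a \<otimes> inv b \<in> K"
  then show "K #> a = K #> b"
    using subgroup.rcos_module_rev[OF K is_group] repr_independence[OF _ _ K] assms by metis
qed

lemma sch_vertex_subset: "subgroup K G \<Longrightarrow> v \<in> sch_vertices G K \<Longrightarrow> v \<subseteq> carrier G"
  using r_coset_subset_G[OF subgroup.subset] by (auto simp: sch_vertices_iff)

lemma sch_vertices_r_coset_closed:
  assumes K: "subgroup K G" and "v \<in> sch_vertices G K" "x \<in> carrier G"
  shows "v #> x \<in> sch_vertices G K"
proof -
  obtain a where "a \<in> carrier G" "v = K #> a" using assms(2) by (auto simp: sch_vertices_iff)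
  then have "v #> x = K #> (a \<otimes> x)"
    using coset_mult_assoc subgroup.subset[OF K] \<open>x \<in> carrier G\<close> by simp
  then show ?thesis
    using \<open>a \<in> carrier G\<close> \<open>x \<in> carrier G\<close> by (auto simp: sch_vertices_iff)
qed

lemma sch_aut_mem_sch_vertices:
  "sch_aut G K S f g \<Longrightarrow> v \<in> sch_vertices G K \<Longrightarrow> f v \<in> sch_vertices G K"
  by (auto simp: sch_aut_def dest: bij_betwE)

lemma sch_aut_X_r_coset_label:
  assumes "sch_aut_X G K S f g" "v \<in> sch_vertices G K" "x \<in> sch_labels G S"
  shows "f (v #> x) = f v #> x"
proof -
  have e: "(v, x) \<in> sch_edges G K S" using assms(2,3) by (simp add: sch_edges_def)
  then have "f v = fst (g (v, x))" "f (v #> x) = fst (g (v, x)) #> snd (g (v, x))"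
      and "snd (g (v, x)) = x"
    using assms(1)
    by (auto simp: sch_aut_X_def sch_aut_def sch_origin_def sch_terminus_def sch_label_def)
  then show ?thesis by simp
qed

lemma sch_aut_X_r_coset:
  assumes K: "subgroup K G" and "S \<subseteq> carrier G" "generate G S = carrier G"
    and aut: "sch_aut_X G K S f g" and "v \<in> sch_vertices G K" "a \<in> carrier G"
  shows "f (v #> a) = f v #> a"
proof -
  have "a \<in> generate G S" using assms by simp
  then show ?thesis
    using \<open>v \<in> sch_vertices G K\<close>
  proof (induction arbitrary: v rule: generate.induct)
    case one
    then have "f v \<in> sch_vertices G K"
      using aut sch_aut_mem_sch_vertices by (auto simp: sch_aut_X_def)
    then show ?case
      using one sch_vertex_subset[OF K] by simp
  next
    case (incl x)
    then show ?case
      using aut sch_aut_X_r_coset_label \<open>S \<subseteq> carrier G\<close> by (auto simp: sch_labels_def)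
  next
    case (inv x)
    then show ?case
      using aut sch_aut_X_r_coset_label \<open>S \<subseteq> carrier G\<close> by (auto simp: sch_labels_def)
  next
    case (eng x y)
    have xy: "x \<in> carrier G" "y \<in> carrier G" using eng.hyps assms(3) by auto
    have fv: "f v \<in> sch_vertices G K"
      using aut eng.prems sch_aut_mem_sch_vertices by (auto simp: sch_aut_X_def)
    have "f (v #> (x \<otimes> y)) = f ((v #> x) #> y)"
      using coset_mult_assoc sch_vertex_subset[OF K eng.prems] xy by simp
    also have "\<dots> = (f v #> x) #> y"
      using eng.IH sch_vertices_r_coset_closed[OF K eng.prems xy(1)] eng.prems by simp
    also have "\<dots> = f v #> (x \<otimes> y)"
      using coset_mult_assoc sch_vertex_subset[OF K fv] xy by simp
    finally show ?case .
  qed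
qed

lemma sch_aut_X_eq_normalizer_mult:
  assumes K: "subgroup K G" and S: "S \<subseteq> carrier G" "generate G S = carrier G"
    and aut: "sch_aut_X G K S f g"
  shows "\<exists>n\<in>normalizer G K. \<forall>a\<in>carrier G. f (K #> a) = K #> (n \<otimes> a)"
proof -
  have KG: "K \<subseteq> carrier G" using subgroup.subset[OF K] .
  have K_vertex: "K \<in> sch_vertices G K"
    using coset_mult_one[OF KG] by (metis one_closed sch_vertices_iff)
  then have "f K \<in> sch_vertices G K"
    using aut sch_aut_mem_sch_vertices unfolding sch_aut_X_def by blast
  then obtain n where n: "n \<in> carrier G" "f K = K #> n"
    by (auto simp: sch_vertices_iff)
  have f: "f (K #> a) = K #> (n \<otimes> a)" if "a \<in> carrier G" for a
    using sch_aut_X_r_coset[OF K S aut K_vertex that] n that coset_mult_assoc[OF KG] by simp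
  have "inj_on f (sch_vertices G K)"
    using aut by (auto simp: sch_aut_X_def sch_aut_def bij_betw_def)
  have "n \<otimes> k \<otimes> inv n \<in> K \<and> inv n \<otimes> k \<otimes> n \<in> K" if k: "k \<in> K" for k
  proof
    have kG: "k \<in> carrier G" using k KG by blast
    have "K #> (n \<otimes> k) = K #> n"
      using f[OF kG] coset_join2[OF kG K k] n by simp
    then show "n \<otimes> k \<otimes> inv n \<in> K"
      using r_coset_eq_iff[OF K] n kG by simp
    have "f (K #> (inv n \<otimes> k \<otimes> n)) = K #> (k \<otimes> n)"
      using f n kG by (simp add: m_assoc)
    also have "\<dots> = f (K #> \<one>)"
      using r_coset_eq_iff[OF K] n kG k f by (simp add: m_assoc)
    finally have "K #> (inv n \<otimes> k \<otimes> n) = K #> \<one>"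
      using inj_onD[OF \<open>inj_on f (sch_vertices G K)\<close>] r_coset_in_sch_vertices n kG by simp
    then show "inv n \<otimes> k \<otimes> n \<in> K"
      using r_coset_eq_iff[OF K] n kG by simp
  qed
  then have "n \<in> normalizer G K"
    using n mem_normalizer_iff[OF K] by blast
  with f show ?thesis by blast
qed
end

section \<open>Balls\<close>

fun word_ball :: "('a, 'b) monoid_scheme \<Rightarrow> 'a set \<Rightarrow> nat \<Rightarrow> 'a set" where
  "word_ball G S 0 = {\<one>\<^bsub>G\<^esub>}"
| "word_ball G S (Suc r) =
     word_ball G S r \<union> (\<lambda>(w, x). w \<otimes>\<^bsub>G\<^esub> x) ` (word_ball G S r \<times> sch_labels G S)"

fun sch_ball :: "('a, 'b) monoid_scheme \<Rightarrow> 'a set \<Rightarrow> 'a set \<Rightarrow> 'a set \<Rightarrow> nat \<Rightarrow> 'a set set" where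
  "sch_ball G K S v 0 = {v}"
| "sch_ball G K S v (Suc r) =
     sch_ball G K S v r \<union> sch_terminus G ` {e \<in> sch_edges G K S. sch_origin e \<in> sch_ball G K S v r}"

context group
begin

lemma sch_labels_subset: "sch_labels G S \<subseteq> carrier G"
  by (auto simp: sch_labels_def)

lemma finite_sch_labels: "finite S \<Longrightarrow> finite (sch_labels G S)"
proof -
  have "sch_labels G S \<subseteq> S \<union> m_inv G ` S"
    by (force simp: sch_labels_def image_iff intro: inv_inv[symmetric])
  then show "finite S \<Longrightarrow> finite (sch_labels G S)"
    using finite_subset by blast
qed

lemma word_ball_subset: "word_ball G S r \<subseteq> carrier G"
  by (induction r) (auto simp: sch_labels_def)

lemma finite_word_ball: "finite S \<Longrightarrow> finite (word_ball G S r)"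
  by (induction r) (simp_all add: finite_sch_labels)

lemma word_ball_mono: "r \<le> s \<Longrightarrow> word_ball G S r \<subseteq> word_ball G S s"
  by (rule lift_Suc_mono_le[of "word_ball G S"]) auto

lemma word_ball_mult:
  "x \<in> word_ball G S r \<Longrightarrow> y \<in> word_ball G S s \<Longrightarrow> x \<otimes> y \<in> word_ball G S (r + s)"
proof (induction s arbitrary: y)
  case 0
  then have "x \<in> carrier G" using word_ball_subset by blast
  with 0 show ?case by simp
next
  case (Suc s)
  show ?case
  proof (cases "y \<in> word_ball G S s")
    case True
    then show ?thesis using Suc.IH Suc.prems(1) word_ball_mono[of "r + s" "r + Suc s"] by auto
  next
    case False
    then obtain w l where "w \<in> word_ball G S s" "l \<in> sch_labels G S" "y = w \<otimes> l"
      using Suc.prems(2) by auto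
    moreover have "x \<in> carrier G" using Suc.prems(1) word_ball_subset by blast
    moreover have "w \<in> carrier G" "l \<in> carrier G"
      using calculation word_ball_subset sch_labels_subset by blast+
    moreover have "(x \<otimes> w) \<otimes> l \<in> word_ball G S (Suc (r + s))"
      using Suc.IH[OF Suc.prems(1) \<open>w \<in> word_ball G S s\<close>] \<open>l \<in> sch_labels G S\<close> by auto
    ultimately show ?thesis
      by (simp add: m_assoc)
  qed
qed

lemma sch_labels_subset_word_ball: "sch_labels G S \<subseteq> word_ball G S (Suc 0)"
proof
  fix x assume x: "x \<in> sch_labels G S"
  then have "(\<lambda>(w, x). w \<otimes> x) (\<one>, x) \<in> word_ball G S (Suc 0)"
    by (simp only: word_ball.simps) blast
  moreover have "x \<in> carrier G" using x subsetD[OF sch_labels_subset] by blast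
  ultimately show "x \<in> word_ball G S (Suc 0)"
    by simp
qed

lemma generate_subset_word_balls:
  assumes "S \<subseteq> carrier G" "x \<in> generate G S"
  shows "\<exists>r. x \<in> word_ball G S r"
  using assms(2)
proof (induction rule: generate.induct)
  case one
  have "\<one> \<in> word_ball G S 0" by simp
  then show ?case ..
next
  case (incl s)
  then have "s \<in> sch_labels G S" using assms(1) by (auto simp: sch_labels_def)
  then have "s \<in> word_ball G S (Suc 0)" using sch_labels_subset_word_ball by blast
  then show ?case ..
next
  case (inv s)
  then have "inv s \<in> sch_labels G S" using assms(1) by (auto simp: sch_labels_def)
  then have "inv s \<in> word_ball G S (Suc 0)" using sch_labels_subset_word_ball by blast
  then show ?case ..
next
  case (eng x y)
  then obtain r s where "x \<in> word_ball G S r" "y \<in> word_ball G S s" by blast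
  then have "x \<otimes> y \<in> word_ball G S (r + s)" by (rule word_ball_mult)
  then show ?case ..
qed

lemma sch_ball_r_coset:
  assumes K: "subgroup K G" and a: "a \<in> carrier G"
  shows "sch_ball G K S (K #> a) r = (\<lambda>w. K #> (a \<otimes> w)) ` word_ball G S r"
proof (induction r)
  case 0
  then show ?case using a by simp
next
  case (Suc r)
  let ?B = "word_ball G S r" and ?L = "sch_labels G S"
  have KG: "K \<subseteq> carrier G" using subgroup.subset[OF K] .
  have "{e \<in> sch_edges G K S. sch_origin e \<in> sch_ball G K S (K #> a) r}
      = (\<lambda>(w, x). (K #> (a \<otimes> w), x)) ` (?B \<times> ?L)"
  proof (intro equalityI subsetI)
    fix e assume "e \<in> {e \<in> sch_edges G K S. sch_origin e \<in> sch_ball G K S (K #> a) r}"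
    then obtain w x where "w \<in> ?B" "x \<in> ?L" "e = (K #> (a \<otimes> w), x)"
      unfolding Suc.IH by (auto simp: sch_edges_def sch_origin_def)
    then show "e \<in> (\<lambda>(w, x). (K #> (a \<otimes> w), x)) ` (?B \<times> ?L)" by force
  next
    fix e assume "e \<in> (\<lambda>(w, x). (K #> (a \<otimes> w), x)) ` (?B \<times> ?L)"
    then obtain w x where wx: "w \<in> ?B" "x \<in> ?L" "e = (K #> (a \<otimes> w), x)" by auto
    then have "K #> (a \<otimes> w) \<in> sch_vertices G K"
      using a subsetD[OF word_ball_subset] by (auto simp: sch_vertices_iff)
    with wx show "e \<in> {e \<in> sch_edges G K S. sch_origin e \<in> sch_ball G K S (K #> a) r}"
      unfolding Suc.IH by (auto simp: sch_edges_def sch_origin_def)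
  qed
  also have "sch_terminus G ` \<dots> = (\<lambda>w. K #> (a \<otimes> w)) ` (\<lambda>(w, x). w \<otimes> x) ` (?B \<times> ?L)"
    unfolding image_image
  proof (rule image_cong[OF refl])
    fix p assume "p \<in> ?B \<times> ?L"
    then have "fst p \<in> carrier G" "snd p \<in> carrier G"
      using subsetD[OF word_ball_subset] subsetD[OF sch_labels_subset] by auto
    then show "sch_terminus G ((\<lambda>(w, x). (K #> (a \<otimes> w), x)) p)
        = K #> (a \<otimes> (case p of (w, x) \<Rightarrow> w \<otimes> x))"
      using coset_mult_assoc[OF KG] a by (simp add: sch_terminus_def split_beta m_assoc)
  qed
  finally show ?case
    using Suc.IH by (simp add: image_Un)
qed

lemma sch_ball_subset:
  assumes "subgroup K G" "v \<in> sch_vertices G K"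
  shows "sch_ball G K S v r \<subseteq> sch_vertices G K"
proof -
  obtain a where "a \<in> carrier G" "v = K #> a" using assms(2) by (auto simp: sch_vertices_iff)
  then show ?thesis
    using sch_ball_r_coset[OF assms(1)] subsetD[OF word_ball_subset] r_coset_in_sch_vertices
    by auto
qed

lemma image_sch_ball:
  assumes K: "subgroup K G" and aut: "sch_aut G K S f g" and v: "v \<in> sch_vertices G K"
  shows "f ` sch_ball G K S v r = sch_ball G K S (f v) r"
proof (induction r)
  case 0
  then show ?case by simp
next
  case (Suc r)
  let ?E = "sch_edges G K S" and ?V = "sch_vertices G K"
  have bij: "bij_betw g ?E ?E" and inj: "inj_on f ?V"
    and origin: "\<And>e. e \<in> ?E \<Longrightarrow> f (sch_origin e) = sch_origin (g e)"
    and terminus: "\<And>e. e \<in> ?E \<Longrightarrow> f (sch_terminus G e) = sch_terminus G (g e)"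
    using aut by (auto simp: sch_aut_def bij_betw_def)
  have ball_iff: "sch_origin (g e) \<in> sch_ball G K S (f v) r \<longleftrightarrow> sch_origin e \<in> sch_ball G K S v r"
    if "e \<in> ?E" for e
  proof -
    have "sch_origin e \<in> ?V" using that by (auto simp: sch_edges_def sch_origin_def)
    then show ?thesis
      using inj_on_image_mem_iff[OF inj _ sch_ball_subset[OF K v]] origin[OF that, symmetric]
      by (simp flip: Suc.IH)
  qed
  have "g ` {e \<in> ?E. sch_origin e \<in> sch_ball G K S v r}
      = {e \<in> ?E. sch_origin e \<in> sch_ball G K S (f v) r}"
  proof (intro equalityI subsetI)
    fix e' assume "e' \<in> {e \<in> ?E. sch_origin e \<in> sch_ball G K S (f v) r}"
    moreover obtain e where "e \<in> ?E" "e' = g e"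
      using bij calculation unfolding bij_betw_def by blast
    ultimately show "e' \<in> g ` {e \<in> ?E. sch_origin e \<in> sch_ball G K S v r}"
      using ball_iff by auto
  qed (use bij ball_iff in \<open>auto simp: bij_betw_def\<close>)
  moreover have "f ` sch_terminus G ` {e \<in> ?E. sch_origin e \<in> sch_ball G K S v r}
      = sch_terminus G ` g ` {e \<in> ?E. sch_origin e \<in> sch_ball G K S v r}"
    unfolding image_image by (rule image_cong[OF refl]) (simp add: terminus)
  ultimately show ?case
    using Suc.IH by (simp add: image_Un)
qed

lemma card_sch_ball_sch_aut:
  assumes "subgroup K G" "sch_aut G K S f g" "v \<in> sch_vertices G K"
  shows "card (sch_ball G K S (f v) r) = card (sch_ball G K S v r)"
proof -
  have "inj_on f (sch_ball G K S v r)"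
    using assms sch_ball_subset inj_on_subset by (fastforce simp: sch_aut_def bij_betw_def)
  then show ?thesis
    using image_sch_ball[OF assms] card_image by metis
qed

lemma card_sch_ball_less_iff:
  assumes K: "subgroup K G" and "finite S" and a: "a \<in> carrier G"
  shows "card (sch_ball G K S (K #> a) r) < card (word_ball G S r) \<longleftrightarrow>
    (\<exists>w\<in>word_ball G S r. \<exists>w'\<in>word_ball G S r. w \<noteq> w' \<and> a \<otimes> (w \<otimes> inv w') \<otimes> inv a \<in> K)"
proof -
  let ?B = "word_ball G S r"
  have "finite ?B" using finite_word_ball[OF \<open>finite S\<close>] .
  have collide: "K #> (a \<otimes> w) = K #> (a \<otimes> w') \<longleftrightarrow> a \<otimes> (w \<otimes> inv w') \<otimes> inv a \<in> K"
    if "w \<in> ?B" "w' \<in> ?B" for w w'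
  proof -
    have "w \<in> carrier G" "w' \<in> carrier G" using that subsetD[OF word_ball_subset] by auto
    then show ?thesis
      using r_coset_eq_iff[OF K] a by (simp add: inv_mult_group m_assoc)
  qed
  let ?f = "\<lambda>w. K #> (a \<otimes> w)"
  have "card (sch_ball G K S (K #> a) r) < card ?B \<longleftrightarrow> card (?f ` ?B) \<noteq> card ?B"
    using card_image_le[OF \<open>finite ?B\<close>, of ?f] by (simp add: sch_ball_r_coset[OF K a] order_less_le)
  also have "\<dots> \<longleftrightarrow> \<not> inj_on ?f ?B"
    using card_image eq_card_imp_inj_on[OF \<open>finite ?B\<close>] by blast
  also have "\<dots> \<longleftrightarrow> (\<exists>w\<in>?B. \<exists>w'\<in>?B. w \<noteq> w' \<and> a \<otimes> (w \<otimes> inv w') \<otimes> inv a \<in> K)"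
    unfolding inj_on_def using collide by blast
  finally show ?thesis .
qed

lemma eventually_card_sch_ball_less:
  assumes K: "subgroup K G" "K \<noteq> {\<one>}"
    and S: "finite S" "S \<subseteq> carrier G" "generate G S = carrier G" and a: "a \<in> carrier G"
  shows "eventually (\<lambda>r. card (sch_ball G K S (K #> a) r) < card (word_ball G S r)) sequentially"
proof -
  obtain c where c: "c \<in> K" "c \<noteq> \<one>" using K subgroup.one_closed by blast
  then have cG: "c \<in> carrier G" using subgroup.mem_carrier[OF K(1)] by blast
  \<comment> \<open>The words d and \<one> collide, since K a d = K c a = K a.\<close>
  define d where "d = inv a \<otimes> c \<otimes> a"
  have dG: "d \<in> carrier G" using a cG by (simp add: d_def)
  then obtain r0 where "d \<in> word_ball G S r0"
    using generate_subset_word_balls[OF S(2)] S(3) by blast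
  have "d \<noteq> \<one>"
  proof
    assume "d = \<one>"
    then have "a \<otimes> d \<otimes> inv a = \<one>" using a by simp
    then show False using a cG c(2) by (simp add: d_def m_assoc)
  qed
  have "card (sch_ball G K S (K #> a) r) < card (word_ball G S r)" if "r \<ge> r0" for r
  proof -
    have "d \<in> word_ball G S r" "\<one> \<in> word_ball G S r"
      using word_ball_mono[OF that] \<open>d \<in> word_ball G S r0\<close> word_ball_mono[of 0 r] by auto
    moreover have "a \<otimes> (d \<otimes> inv \<one>) \<otimes> inv a \<in> K"
      using a cG c(1) by (simp add: d_def m_assoc)
    ultimately show ?thesis
      using card_sch_ball_less_iff[OF K(1) S(1) a] \<open>d \<noteq> \<one>\<close> by blast
  qed
  then show ?thesis
    unfolding eventually_sequentially by blast
qed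

end

section \<open>Orbits\<close>

lemma sch_aut_id: "sch_aut G K S id id"
  by (simp add: sch_aut_def)

lemma sch_aut_X_id: "sch_aut_X G K S id id"
  by (simp add: sch_aut_X_def sch_aut_id)

lemma finite_vertex_orbits_representatives:
  assumes "finite (vertex_orbits G K P)" "P id id"
  shows "\<exists>F. finite F \<and> F \<subseteq> sch_vertices G K \<and>
    (\<forall>v\<in>sch_vertices G K. \<exists>u\<in>F. \<exists>f g. P f g \<and> f u = v)"
proof -
  define orbit where "orbit v = {w \<in> sch_vertices G K. \<exists>f g. P f g \<and> f v = w}" for v
  have orbits: "vertex_orbits G K P = orbit ` sch_vertices G K"
    by (simp add: vertex_orbits_def orbit_def)
  obtain F where F: "F \<subseteq> sch_vertices G K" "finite F" "orbit ` sch_vertices G K = orbit ` F"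
    using finite_subset_image[OF assms(1)[unfolded orbits] subset_refl] by blast
  have represented: "\<exists>u\<in>F. \<exists>f g. P f g \<and> f u = v" if v: "v \<in> sch_vertices G K" for v
  proof -
    have "orbit v \<in> orbit ` F" using v F(3) by (metis imageI)
    then obtain u where u: "u \<in> F" "orbit v = orbit u" by auto
    have "P id id \<and> id v = v" using assms(2) by simp
    then have "v \<in> orbit v" using v unfolding orbit_def by blast
    then have "v \<in> orbit u" using u(2) by simp
    with u(1) show ?thesis unfolding orbit_def by blast
  qed
  show ?thesis
    using F(1,2) represented by (intro exI[of _ F]) blast
qed

locale schreier_graph_of_simple_group = group G for G (structure) +
  fixes K S
  assumes simple: "simple_grp G" and infinite_carrier: "infinite (carrier G)"
    and finite_gens: "finite S" and gens_subset: "S \<subseteq> carrier G"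
    and generate_gens: "generate G S = carrier G"
    and subgroup_K: "subgroup K G" and K_nontrivial: "K \<noteq> {\<one>}" and K_proper: "K \<noteq> carrier G"
begin

lemma infinite_vertex_orbits_sch_aut_X: "infinite (vertex_orbits G K (sch_aut_X G K S))"
proof
  assume "finite (vertex_orbits G K (sch_aut_X G K S))"
  from finite_vertex_orbits_representatives[OF this sch_aut_X_id]
  obtain F where F: "finite F" "F \<subseteq> sch_vertices G K"
    "\<forall>v\<in>sch_vertices G K. \<exists>u\<in>F. \<exists>f g. sch_aut_X G K S f g \<and> f u = v"
    by blast
  have "\<forall>u\<in>F. \<exists>a. a \<in> carrier G \<and> K #> a = u"
    using F(2) by (force simp: sch_vertices_iff)
  from bchoice[OF this] obtain rep where rep: "\<forall>u\<in>F. rep u \<in> carrier G \<and> K #> rep u = u" ..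
  let ?N = "normalizer G K"
  interpret N: subgroup ?N G
    by (rule normalizer_imp_subgroup[OF subgroup.subset[OF subgroup_K]])
  have cover: "carrier G \<subseteq> (\<Union>c\<in>rep ` F. ?N #> c)"
  proof
    fix g assume g: "g \<in> carrier G"
    then have "K #> g \<in> sch_vertices G K" by (rule r_coset_in_sch_vertices)
    then obtain u f h where u: "u \<in> F" "sch_aut_X G K S f h" "f u = K #> g"
      using F(3) by blast
    obtain n where n: "n \<in> ?N" "\<forall>a\<in>carrier G. f (K #> a) = K #> (n \<otimes> a)"
      using sch_aut_X_eq_normalizer_mult[OF subgroup_K gens_subset generate_gens u(2)] by blast
    have a: "rep u \<in> carrier G" "K #> rep u = u" using rep u(1) by auto
    have "K #> g = f (K #> rep u)" using u(3) a(2) by simp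
    also have "\<dots> = K #> (n \<otimes> rep u)" using n(2) a(1) by blast
    finally have "g \<otimes> inv (n \<otimes> rep u) \<in> K"
      using r_coset_eq_iff[OF subgroup_K g m_closed[OF N.mem_carrier[OF n(1)] a(1)]] by simp
    then have "(g \<otimes> inv (n \<otimes> rep u)) \<otimes> n \<in> ?N"
      using subgroup_subset_normalizer[OF subgroup_K] n(1) by blast
    then have "g \<otimes> inv (rep u) \<in> ?N"
      using g N.mem_carrier[OF n(1)] a(1) by (simp add: inv_mult_group m_assoc)
    then have "g \<in> ?N #> rep u"
      by (rule N.rcos_module_rev[OF is_group a(1) g])
    with u(1) show "g \<in> (\<Union>c\<in>rep ` F. ?N #> c)" by blast
  qed
  have "finite (rep ` F)" "rep ` F \<subseteq> carrier G" using F(1) rep by auto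
  from normalizer_infinite_index[OF simple infinite_carrier subgroup_K K_nontrivial K_proper this] cover
  show False ..
qed

lemma ex_vertex_with_other_ball_sizes:
  assumes p: "Factorial_Ring.prime (card K)" and V0: "finite V0" "V0 \<subseteq> sch_vertices G K"
  shows "\<exists>v\<in>sch_vertices G K. \<forall>u\<in>V0. \<exists>r. card (sch_ball G K S v r) \<noteq> card (sch_ball G K S u r)"
proof (rule ccontr)
  assume "\<not> ?thesis"
  then have same_sizes: "\<forall>v\<in>sch_vertices G K. \<exists>u\<in>V0. \<forall>r. card (sch_ball G K S v r) = card (sch_ball G K S u r)"
    by blast
  have "\<forall>u\<in>V0. eventually (\<lambda>r. card (sch_ball G K S u r) < card (word_ball G S r)) sequentially"
  proof
    fix u assume "u \<in> V0"
    then obtain a where "a \<in> carrier G" "u = K #> a" using V0(2) sch_vertices_iff by blast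
    then show "eventually (\<lambda>r. card (sch_ball G K S u r) < card (word_ball G S r)) sequentially"
      using eventually_card_sch_ball_less[OF subgroup_K K_nontrivial finite_gens gens_subset generate_gens]
      by blast
  qed
  then have "eventually (\<lambda>r. \<forall>u\<in>V0. card (sch_ball G K S u r) < card (word_ball G S r)) sequentially"
    by (rule eventually_ball_finite[OF V0(1)])
  then obtain R where R: "\<forall>u\<in>V0. card (sch_ball G K S u R) < card (word_ball G S R)"
    unfolding eventually_sequentially by auto
  define D where "D = (\<lambda>(w, w'). w \<otimes> inv w') ` (word_ball G S R \<times> word_ball G S R)"
  have conjugates: "\<exists>d\<in>D. d \<noteq> \<one> \<and> g \<otimes> d \<otimes> inv g \<in> K" if g: "g \<in> carrier G" for g
  proof -
    have "K #> g \<in> sch_vertices G K" using g by (rule r_coset_in_sch_vertices)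
    then obtain u where "u \<in> V0" "\<forall>r. card (sch_ball G K S (K #> g) r) = card (sch_ball G K S u r)"
      using same_sizes by blast
    then have "card (sch_ball G K S (K #> g) R) < card (word_ball G S R)" using R by simp
    then have "\<exists>w\<in>word_ball G S R. \<exists>w'\<in>word_ball G S R. w \<noteq> w' \<and> g \<otimes> (w \<otimes> inv w') \<otimes> inv g \<in> K"
      by (simp add: card_sch_ball_less_iff[OF subgroup_K finite_gens g])
    then obtain w w' where w: "w \<in> word_ball G S R" "w' \<in> word_ball G S R" "w \<noteq> w'"
      and conj: "g \<otimes> (w \<otimes> inv w') \<otimes> inv g \<in> K"
      by blast
    have "w \<otimes> inv w' \<noteq> \<one>"
      using w inv_solve_right'[of \<one> w w'] subsetD[OF word_ball_subset] by auto
    moreover have "w \<otimes> inv w' \<in> D" using w(1,2) by (auto simp: D_def)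
    ultimately show ?thesis using conj by blast
  qed
  have "finite D" "D \<subseteq> carrier G"
    using finite_word_ball[OF finite_gens] subsetD[OF word_ball_subset] by (auto simp: D_def)
  obtain G0 where G0: "finite G0" "G0 \<subseteq> carrier G" "carrier G \<subseteq> (\<Union>c\<in>G0. normalizer G K #> c)"
    by (rule finite_index_normalizer_of_prime_card[OF subgroup_K p \<open>finite D\<close> \<open>D \<subseteq> carrier G\<close> conjugates])
  from normalizer_infinite_index[OF simple infinite_carrier subgroup_K K_nontrivial K_proper G0(1,2)] G0(3)
  show False ..
qed

lemma infinite_vertex_orbits_sch_aut:
  assumes "Factorial_Ring.prime (card K)"
  shows "infinite (vertex_orbits G K (sch_aut G K S))"
proof
  assume "finite (vertex_orbits G K (sch_aut G K S))"
  from finite_vertex_orbits_representatives[OF this sch_aut_id]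
  obtain F where F: "finite F" "F \<subseteq> sch_vertices G K"
    "\<forall>v\<in>sch_vertices G K. \<exists>u\<in>F. \<exists>f g. sch_aut G K S f g \<and> f u = v"
    by blast
  obtain v where v: "v \<in> sch_vertices G K" "\<forall>u\<in>F. \<exists>r. card (sch_ball G K S v r) \<noteq> card (sch_ball G K S u r)"
    using ex_vertex_with_other_ball_sizes[OF assms F(1,2)] by blast
  then obtain u f g where u: "u \<in> F" "sch_aut G K S f g" "f u = v" using F(3) by blast
  have "u \<in> sch_vertices G K" using u(1) F(2) by blast
  then have "card (sch_ball G K S v r) = card (sch_ball G K S u r)" for r
    using card_sch_ball_sch_aut[OF subgroup_K u(2), of u r] u(3) by simp
  moreover obtain r where "card (sch_ball G K S v r) \<noteq> card (sch_ball G K S u r)"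
    using v(2) u(1) by blast
  ultimately show False by simp
qed

lemma not_sch_almost_transitive:
  assumes "Factorial_Ring.prime (card K)"
  shows "\<not> sch_almost_transitive G K S"
proof
  assume "sch_almost_transitive G K S"
  then obtain V0 where V0: "finite V0" "V0 \<subseteq> sch_vertices G K"
    "\<forall>v\<in>sch_vertices G K. \<exists>f g. sch_aut G K S f g \<and> f v \<in> V0"
    by (auto simp: sch_almost_transitive_def)
  obtain v where v: "v \<in> sch_vertices G K" "\<forall>u\<in>V0. \<exists>r. card (sch_ball G K S v r) \<noteq> card (sch_ball G K S u r)"
    using ex_vertex_with_other_ball_sizes[OF assms V0(1,2)] by blast
  then obtain f g where aut: "sch_aut G K S f g" "f v \<in> V0" using V0(3) by blast
  then have "card (sch_ball G K S v r) = card (sch_ball G K S (f v) r)" for r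
    using card_sch_ball_sch_aut[OF subgroup_K aut(1) v(1)] by simp
  with v(2) aut(2) show False by blast
qed

end

theorem corollary6p7:
  fixes A :: "('a, 'b) monoid_scheme" and K S :: "'a set"
  assumes "simple_grp A"
    and "infinite (carrier A)"
    and "finite S" and "S \<subseteq> carrier A" and "generate A S = carrier A"
    and "subgroup K A" and "K \<noteq> {\<one>\<^bsub>A\<^esub>}" and "K \<noteq> carrier A"
  shows "infinite (vertex_orbits A K (sch_aut_X A K S))
    \<and> ((\<exists>k \<in> K. K = generate A {k}) \<and> Factorial_Ring.prime (card K) \<longrightarrow>
         infinite (vertex_orbits A K (sch_aut A K S)) \<and> \<not> sch_almost_transitive A K S)"
proof -
  have "group A" using assms(1) by (simp add: simple_grp_def)
  interpret schreier_graph_of_simple_group A K S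
    by (rule schreier_graph_of_simple_group.intro[OF \<open>group A\<close>
          schreier_graph_of_simple_group_axioms.intro[OF assms]])
  show ?thesis
    by (simp add: infinite_vertex_orbits_sch_aut_X infinite_vertex_orbits_sch_aut
        not_sch_almost_transitive)
qed

end
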